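(* Fix $k\ge0$, $D\geq2$, and let $s^j:=(1-\frac jD)s_k+\frac jDs_{k+1}$, $j=0,\dots,D$, with $s^j\in\mathcal{S}$. Let $w^\ast(s^0)=w^\ast_k$ and, for $j=1,\dots,D$, let $w^\ast(s^j)$ be KKT points of $(P_{s^j})$ with $w^\ast(s^D)=w^\ast_{k+1}$. Let $\bar w_{k+1}$ be produced from $\bar w_k=(\bar z_k,\bar\mu_k)$ by the homotopy scheme: set $z:=\bar z_k$, $\mu:=\bar\mu_k$; for $j=1,\dots,D$: replace $z$ by the result of $M$ successive primal sweeps on $L_\rho(\cdot,\mu,s^j)$ started at $z$, then set $\mu:=\mu+\rho G(z,s^j)$; finally $\bar w_{k+1}:=(z,\mu)$. Assume that the standing hypotheses (A), (B), (C) hold for the parameter sequence $(s^j)_{j=0}^D$, the KKT points $(w^\ast(s^j))_{j=0}^D$ and the intermediate iterates $\bar w^j$ (the values of $(z,\mu)$ after step $j$, $\bar w^0=\bar w_k$), with the same constants. Assume $\beta_w(\rho,M)<1$, $\beta_s(\rho,M)<1$, let $r_w,r_s>0$ satisfy $r_w<q_B\rho$, $\delta-(1+\frac{\lambda_H\lambda_B}{\rho})r_w>0$, $r_s<\frac{(1-\beta_w(\rho,M))r_w}{\beta_s(\rho,M)}$ and $\lambda_H\lambda_Br_s<\delta-(1+\frac{\lambda_H\lambda_B}{\rho})r_w$. If $\|\bar w_k-w^\ast_k\|_2<r_w$, $\|s_{k+1}-s_k\|_2\le r_s$ and $\|s_{k+1}-s_k\|_2<\min\{r_A,r_B,\frac{q_B\rho}{\lambda_A\lambda_F}\}$,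 then $$\|\bar w_{k+1}-w^\ast_{k+1}\|_2\leq\beta_w(\rho,M)^D\|\bar w_k-w^\ast_k\|_2+\beta_s(\rho,M)\frac{\sum_{i=0}^{D-1}\beta_w(\rho,M)^i}{D}\|s_{k+1}-s_k\|_2.$$
   Context: Problem data: $z=(z_1,\dots,z_P)\in\mathbb{R}^{n_z}$; $\mathcal{Z}=\mathcal{Z}_1\times\cdots\times\mathcal{Z}_P$ a product of nonempty bounded boxes; $J(z)=\sum_iJ_i(z_i)$ with polynomials $J_i$; polynomial maps $Q_c:\mathbb{R}^{n_z}\to\mathbb{R}^m$, $g_i:\mathbb{R}^{n_i}\to\mathbb{R}^{q_i}$; $T_i\in\mathbb{R}^{q_i\times p}$; $q=\sum q_i$; $\mathcal{S}\subseteq\mathbb{R}^p$; $G(z,s)=(Q_c(z),g_1(z_1)+T_1s,\dots,g_P(z_P)+T_Ps)$; $L_\rho(z,\mu,s)=J(z)+(\mu+\frac\rho2G(z,s))^\top G(z,s)$; for $w=(z,\mu)$, $F(w,s)=(\nabla J(z)+\nabla_zG(z,s)^\top\mu,\ G(z,s))$; $\mathcal{N}:=\mathcal{N}_{\mathcal{Z}\times\mathbb{R}^{m+q}}$. A KKT point of $(P_s)$: $\min J(z)$ s.t. $G(z,s)=0$, $z\in\mathcal{Z}$, is $w$ with $0\in F(w,s)+\mathcal{N}(w)$. For a reference multiplier $\tilde\mu$: $H^{\tilde\mu}_\rho(w,d,s):=(\nabla J(z)+\nabla_zG(z,s)^\top\mu,\ G(z,s)+d+(\tilde\mu-\mu)/\rho)$.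 Constants: $\lambda_F:=P\max_i\|T_i\|_2$; $\lambda_H>0$ with $\|H^{\tilde\mu}_\rho(w,d,s)-H^{\tilde\mu}_\rho(w,d',s')\|\le\lambda_H\|(d,s)-(d',s')\|$ for all arguments; $\lambda_G>0$ a Lipschitz constant of $z\mapsto G(z,s)$ on $\mathcal{Z}$ (independent of $s$). Primal sweep on $L_\rho(\cdot,\mu,s)$: block-coordinate projected-gradient pass over $i=1,\dots,P$ in order, each block update $z_i\leftarrow\pi_{\mathcal{Z}_i}(z_i-\frac1{c_i}\nabla_{z_i}L_\rho)$ (gradient evaluated with already updated preceding blocks) with curvature $c_i$ obtained by backtracking (multiply by $\beta>1$ from an initial $c_i^0>0$) until $f(u)+\frac{\alpha_i}2\|u-z_i\|^2\le f(z_i)+\nabla f(z_i)^\top(u-z_i)+\frac{c_i}2\|u-z_i\|^2$ for the block function $f$, with $\alpha_i>0$. Standing hypotheses for a parameter sequence $(\sigma_j)_{j\ge0}\subset\mathcal{S}$, KKT points $w^\ast_j=(z^\ast_j,\mu^\ast_j)$ of $(P_{\sigma_j})$, and iterates $\bar w_j=(\bar z_j,\bar\mu_j)$ with $\bar z_{j+1}$ = result of $M$ sweeps on $L_\rho(\cdot,\bar\mu_j,\sigma_{j+1})$ from $\bar z_j$ and $\bar\mu_{j+1}=\bar\mu_j+\rho G(\bar z_{j+1},\sigma_{j+1})$; with $z^\infty_j$ the limit of infinitely many such sweeps, $w^\infty_j:=(z^\infty_j,\bar\mu_j+\rho G(z^\infty_j,\sigma_{j+1}))$, $d_j:=(\bar\mu_j-\mu^\ast_j)/\rho$;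 for every $j$: (A) constants $r_A,\delta_A,\lambda_A>0$ such that for every $s\in\mathcal{B}(\sigma_j,r_A)\cap\mathcal{S}$ there is a unique $w^\ast(s)\in\mathcal{B}(w^\ast_j,\delta_A)$ with $0\in F(w^\ast(s),s)+\mathcal{N}(w^\ast(s))$, $\|w^\ast(s)-w^\ast(s')\|\le\lambda_A\|F(w^\ast(s'),s)-F(w^\ast(s'),s')\|$ for $s,s'$ in that ball, and $w^\ast_{j+1}=w^\ast(\sigma_{j+1})$ whenever $\|\sigma_{j+1}-\sigma_j\|<r_A$; (B) constants $r_B,q_B,\lambda_B>0$, $\delta_B\ge\delta_A$ such that for all $d\in\mathcal{B}(0,q_B)$, $s\in\mathcal{B}(\sigma_j,r_B)\cap\mathcal{S}$ there is a unique $w^\ast_j(d,s)\in\mathcal{B}(w^\ast_j,\delta_B)$ with $0\in H^{\mu^\ast_j}_\rho(w^\ast_j(d,s),d,s)+\mathcal{N}(w^\ast_j(d,s))$ and $\|w^\ast_j(d,s)-w^\ast_j(d',s')\|\le\lambda_B\|H^{\mu^\ast_j}_\rho(w^\ast_j(d',s'),d,s)-H^{\mu^\ast_j}_\rho(w^\ast_j(d',s'),d',s')\|$; (C) constants $C,\delta,\psi>0$ such that $z^\infty_j$ exists, $w^\infty_j=w^\ast_j(d_j,\sigma_{j+1})$ whenever $d_j\in\mathcal{B}(0,q_B)$ and $\|\sigma_{j+1}-\sigma_j\|<r_B$, and $\|\bar z_j-z^\infty_j\|<\delta$ implies $\|\bar z_{j+1}-z^\infty_j\|\le CM^{-\psi}\|\bar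 z_j-z^\infty_j\|$. Coefficients: $\beta_w(\rho,M):=C(1+\rho\lambda_G)(1+\frac{\lambda_B\lambda_H}{\rho})M^{-\psi}+\frac{\lambda_B\lambda_H}{\rho}$ and $\beta_s(\rho,M):=C(1+\rho\lambda_G)\lambda_B\lambda_HM^{-\psi}+\frac{\lambda_B\lambda_H\lambda_A\lambda_F}{\rho}$. Here $\rho>0$ and $M\ge1$ are fixed; $(s_k)$ is a parameter sequence with KKT points $w^\ast_k$ of $(P_{s_k})$ and $\bar w_k=(\bar z_k,\bar\mu_k)$, $\bar z_k\in\mathcal{Z}$, the current suboptimal iterate. *)

theory Defs
  imports "HOL-Analysis.Analysis"
begin

inductive_set poly_fun :: "(real^'n \<Rightarrow> real) set" where
  pf_const: "(\<lambda>x. c) \<in> poly_fun"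
| pf_coord: "(\<lambda>x. x $ i) \<in> poly_fun"
| pf_add: "f \<in> poly_fun \<Longrightarrow> g \<in> poly_fun \<Longrightarrow> (\<lambda>x. f x + g x) \<in> poly_fun"
| pf_mult: "f \<in> poly_fun \<Longrightarrow> g \<in> poly_fun \<Longrightarrow> (\<lambda>x. f x * g x) \<in> poly_fun"

definition poly_map :: "(real^'n \<Rightarrow> real^'m) \<Rightarrow> bool" where
  "poly_map f \<longleftrightarrow> (\<forall>c. (\<lambda>x. f x $ c) \<in> poly_fun)"

definition block_local :: "('n \<Rightarrow> nat) \<Rightarrow> nat \<Rightarrow> (real^'n \<Rightarrow> 'b) \<Rightarrow> bool" where
  "block_local blk i f \<longleftrightarrow>
     (\<forall>z z'. (\<forall>x. blk x = i \<longrightarrow> z $ x = z' $ x) \<longrightarrow> f z = f z')"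

definition partial :: "(real^'n \<Rightarrow> real) \<Rightarrow> real^'n \<Rightarrow> 'n \<Rightarrow> real" where
  "partial f z x = frechet_derivative f (at z) (axis x 1)"

definition grad :: "(real^'n \<Rightarrow> real) \<Rightarrow> real^'n \<Rightarrow> real^'n" where
  "grad f z = (\<chi> x. partial f z x)"

definition jacT :: "(real^'n \<Rightarrow> real^'p \<Rightarrow> real^'c) \<Rightarrow> real^'n \<Rightarrow> real^'p \<Rightarrow> real^'c \<Rightarrow> real^'n" where
  "jacT G z s mu = (\<chi> x. \<Sum>c\<in>UNIV. mu $ c * partial (\<lambda>y. G y s $ c) z x)"

definition boxZ :: "real^'n \<Rightarrow> real^'n \<Rightarrow> (real^'n) set" where
  "boxZ lo hi = {z. \<forall>x. lo $ x \<le> z $ x \<and> z $ x \<le> hi $ x}"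

text \<open>Constraint map G(z,s) = (Q_c(z), g_1(z_1)+T_1 s, ..., g_P(z_P)+T_P s).
  Constraint components c with cblk c = 0 belong to Q_c, those with cblk c = i to block i.\<close>
definition Gmap :: "('c \<Rightarrow> nat) \<Rightarrow> (real^'n \<Rightarrow> real^'c) \<Rightarrow> (real^'n \<Rightarrow> real^'c)
    \<Rightarrow> real^'p^'c \<Rightarrow> real^'n \<Rightarrow> real^'p \<Rightarrow> real^'c" where
  "Gmap cblk Qc gg T z s = (\<chi> c. if cblk c = 0 then Qc z $ c else gg z $ c + (T *v s) $ c)"

text \<open>T_i as a linear map R^p -> R^q (rows of block i, zero-padded; padding does not change the 2-norm)\<close>
definition Tblock :: "('c \<Rightarrow> nat) \<Rightarrow> real^'p^'c \<Rightarrow> nat \<Rightarrow> real^'p \<Rightarrow> real^'c" where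
  "Tblock cblk T i s = (\<chi> c. if cblk c = i then (T *v s) $ c else 0)"

definition lamF :: "nat \<Rightarrow> ('c \<Rightarrow> nat) \<Rightarrow> real^'p^'c \<Rightarrow> real" where
  "lamF P cblk T = real P * Max ((\<lambda>i. onorm (Tblock cblk T i)) ` {1..P})"

definition Lrho :: "(real^'n \<Rightarrow> real) \<Rightarrow> (real^'n \<Rightarrow> real^'p \<Rightarrow> real^'c) \<Rightarrow> real
    \<Rightarrow> real^'n \<Rightarrow> real^'c \<Rightarrow> real^'p \<Rightarrow> real" where
  "Lrho J G rho z mu s = J z + (mu + (rho / 2) *\<^sub>R G z s) \<bullet> G z s"

definition Fmap :: "(real^'n \<Rightarrow> real) \<Rightarrow> (real^'n \<Rightarrow> real^'p \<Rightarrow> real^'c)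
    \<Rightarrow> (real^'n) \<times> (real^'c) \<Rightarrow> real^'p \<Rightarrow> (real^'n) \<times> (real^'c)" where
  "Fmap J G w s = (grad J (fst w) + jacT G (fst w) s (snd w), G (fst w) s)"

definition Hmap :: "(real^'n \<Rightarrow> real) \<Rightarrow> (real^'n \<Rightarrow> real^'p \<Rightarrow> real^'c) \<Rightarrow> real \<Rightarrow> real^'c
    \<Rightarrow> (real^'n) \<times> (real^'c) \<Rightarrow> real^'c \<Rightarrow> real^'p \<Rightarrow> (real^'n) \<times> (real^'c)" where
  "Hmap J G rho mut w d s =
     (grad J (fst w) + jacT G (fst w) s (snd w),
      G (fst w) s + d + (1 / rho) *\<^sub>R (mut - snd w))"

definition normal_cone :: "'a::real_inner set \<Rightarrow> 'a \<Rightarrow> 'a set" where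
  "normal_cone C x = (if x \<in> C then {v. \<forall>y\<in>C. v \<bullet> (y - x) \<le> 0} else {})"

definition gen_eq :: "(real^'n) set \<Rightarrow> (real^'n) \<times> (real^'c) \<Rightarrow> (real^'n) \<times> (real^'c) \<Rightarrow> bool" where
  "gen_eq Z V w \<longleftrightarrow> (\<exists>v \<in> normal_cone (Z \<times> UNIV) w. V + v = 0)"

definition is_KKT :: "(real^'n \<Rightarrow> real) \<Rightarrow> (real^'n \<Rightarrow> real^'p \<Rightarrow> real^'c) \<Rightarrow> (real^'n) set
    \<Rightarrow> (real^'n) \<times> (real^'c) \<Rightarrow> real^'p \<Rightarrow> bool" where
  "is_KKT J G Z w s \<longleftrightarrow> gen_eq Z (Fmap J G w s) w"

definition bgrad :: "('n \<Rightarrow> nat) \<Rightarrow> nat \<Rightarrow> (real^'n \<Rightarrow> real) \<Rightarrow> real^'n \<Rightarrow> real^'n" where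
  "bgrad blk i f z = (\<chi> x. if blk x = i then grad f z $ x else 0)"

text \<open>trial block update: z_i <- proj_{Z_i}(z_i - (1/c) grad_{z_i} f), other blocks unchanged\<close>
definition block_trial :: "('n \<Rightarrow> nat) \<Rightarrow> (real^'n) set \<Rightarrow> nat \<Rightarrow> (real^'n \<Rightarrow> real)
    \<Rightarrow> real^'n \<Rightarrow> real \<Rightarrow> real^'n" where
  "block_trial blk Z i f z c =
     closest_point {y. y \<in> Z \<and> (\<forall>x. blk x \<noteq> i \<longrightarrow> y $ x = z $ x)} (z - (1 / c) *\<^sub>R bgrad blk i f z)"

definition bt_accept :: "('n \<Rightarrow> nat) \<Rightarrow> (real^'n) set \<Rightarrow> nat \<Rightarrow> (real^'n \<Rightarrow> real)
    \<Rightarrow> real \<Rightarrow> real^'n \<Rightarrow> real \<Rightarrow> bool" where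
  "bt_accept blk Z i f a z c \<longleftrightarrow>
     (let u = block_trial blk Z i f z c in
      f u + (a / 2) * (norm (u - z))\<^sup>2
        \<le> f z + bgrad blk i f z \<bullet> (u - z) + (c / 2) * (norm (u - z))\<^sup>2)"

definition bt_curv :: "('n \<Rightarrow> nat) \<Rightarrow> (real^'n) set \<Rightarrow> nat \<Rightarrow> (real^'n \<Rightarrow> real)
    \<Rightarrow> real \<Rightarrow> real \<Rightarrow> real \<Rightarrow> real^'n \<Rightarrow> real" where
  "bt_curv blk Z i f a c0 beta z = c0 * beta ^ (LEAST k. bt_accept blk Z i f a z (c0 * beta ^ k))"

definition block_update :: "('n \<Rightarrow> nat) \<Rightarrow> (real^'n) set \<Rightarrow> nat \<Rightarrow> (real^'n \<Rightarrow> real)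
    \<Rightarrow> real \<Rightarrow> real \<Rightarrow> real \<Rightarrow> real^'n \<Rightarrow> real^'n" where
  "block_update blk Z i f a c0 beta z = block_trial blk Z i f z (bt_curv blk Z i f a c0 beta z)"

definition sweep :: "(real^'n \<Rightarrow> real) \<Rightarrow> (real^'n \<Rightarrow> real^'p \<Rightarrow> real^'c) \<Rightarrow> ('n \<Rightarrow> nat)
    \<Rightarrow> (real^'n) set \<Rightarrow> nat \<Rightarrow> (nat \<Rightarrow> real) \<Rightarrow> (nat \<Rightarrow> real) \<Rightarrow> real \<Rightarrow> real
    \<Rightarrow> real^'c \<Rightarrow> real^'p \<Rightarrow> real^'n \<Rightarrow> real^'n" where
  "sweep J G blk Z P alpha c0 beta rho mu s z =
     foldl (\<lambda>y i. block_update blk Z i (\<lambda>v. Lrho J G rho v mu s) (alpha i) (c0 i) beta y) z [1..<P+1]"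

primrec hom_iter :: "(real^'c \<Rightarrow> real^'p \<Rightarrow> real^'n \<Rightarrow> real^'n) \<Rightarrow> (real^'n \<Rightarrow> real^'p \<Rightarrow> real^'c)
    \<Rightarrow> real \<Rightarrow> nat \<Rightarrow> (nat \<Rightarrow> real^'p) \<Rightarrow> (real^'n) \<times> (real^'c) \<Rightarrow> nat \<Rightarrow> (real^'n) \<times> (real^'c)" where
  "hom_iter sw G rho M sg w0 0 = w0"
| "hom_iter sw G rho M sg w0 (Suc j) =
     (let z = (sw (snd (hom_iter sw G rho M sg w0 j)) (sg (Suc j)) ^^ M)
                (fst (hom_iter sw G rho M sg w0 j))
      in (z, snd (hom_iter sw G rho M sg w0 j) + rho *\<^sub>R G z (sg (Suc j))))"

definition beta_w :: "real \<Rightarrow> real \<Rightarrow> real \<Rightarrow> real \<Rightarrow> real \<Rightarrow> real \<Rightarrow> nat \<Rightarrow> real" where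
  "beta_w C lamG lamB lamH psi rho M =
     C * (1 + rho * lamG) * (1 + lamB * lamH / rho) * real M powr (- psi) + lamB * lamH / rho"

definition beta_s :: "real \<Rightarrow> real \<Rightarrow> real \<Rightarrow> real \<Rightarrow> real \<Rightarrow> real \<Rightarrow> real \<Rightarrow> real \<Rightarrow> nat \<Rightarrow> real" where
  "beta_s C lamG lamB lamH lamA lamFc psi rho M =
     C * (1 + rho * lamG) * lamB * lamH * real M powr (- psi) + lamB * lamH * lamA * lamFc / rho"


definition hypA :: "(real^'n \<Rightarrow> real) \<Rightarrow> (real^'n \<Rightarrow> real^'p \<Rightarrow> real^'c) \<Rightarrow> (real^'n) set
    \<Rightarrow> (real^'p) set \<Rightarrow> (nat \<Rightarrow> real^'p) \<Rightarrow> (nat \<Rightarrow> (real^'n) \<times> (real^'c)) \<Rightarrow> nat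
    \<Rightarrow> real \<Rightarrow> real \<Rightarrow> real \<Rightarrow> (real^'p \<Rightarrow> (real^'n) \<times> (real^'c)) \<Rightarrow> bool" where
  "hypA J G Z S sig wst j rA dA lamA wA \<longleftrightarrow>
     (\<forall>s \<in> ball (sig j) rA \<inter> S.
        wA s \<in> ball (wst j) dA \<and> is_KKT J G Z (wA s) s \<and>
        (\<forall>w \<in> ball (wst j) dA. is_KKT J G Z w s \<longrightarrow> w = wA s)) \<and>
     (\<forall>s \<in> ball (sig j) rA \<inter> S. \<forall>s' \<in> ball (sig j) rA \<inter> S.
        norm (wA s - wA s') \<le> lamA * norm (Fmap J G (wA s') s - Fmap J G (wA s') s')) \<and>
     (norm (sig (Suc j) - sig j) < rA \<longrightarrow> wst (Suc j) = wA (sig (Suc j)))"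

definition hypB :: "(real^'n \<Rightarrow> real) \<Rightarrow> (real^'n \<Rightarrow> real^'p \<Rightarrow> real^'c) \<Rightarrow> (real^'n) set \<Rightarrow> real
    \<Rightarrow> (real^'p) set \<Rightarrow> (nat \<Rightarrow> real^'p) \<Rightarrow> (nat \<Rightarrow> (real^'n) \<times> (real^'c)) \<Rightarrow> nat
    \<Rightarrow> real \<Rightarrow> real \<Rightarrow> real \<Rightarrow> real \<Rightarrow> (real^'c \<Rightarrow> real^'p \<Rightarrow> (real^'n) \<times> (real^'c)) \<Rightarrow> bool" where
  "hypB J G Z rho S sig wst j rB qB lamB dB wB \<longleftrightarrow>
     (\<forall>d \<in> ball 0 qB. \<forall>s \<in> ball (sig j) rB \<inter> S.
        wB d s \<in> ball (wst j) dB \<and>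
        gen_eq Z (Hmap J G rho (snd (wst j)) (wB d s) d s) (wB d s) \<and>
        (\<forall>w \<in> ball (wst j) dB. gen_eq Z (Hmap J G rho (snd (wst j)) w d s) w \<longrightarrow> w = wB d s)) \<and>
     (\<forall>d \<in> ball 0 qB. \<forall>s \<in> ball (sig j) rB \<inter> S. \<forall>d' \<in> ball 0 qB. \<forall>s' \<in> ball (sig j) rB \<inter> S.
        norm (wB d s - wB d' s') \<le>
          lamB * norm (Hmap J G rho (snd (wst j)) (wB d' s') d s
                       - Hmap J G rho (snd (wst j)) (wB d' s') d' s'))"

definition hypC :: "(real^'n \<Rightarrow> real^'p \<Rightarrow> real^'c) \<Rightarrow> real
    \<Rightarrow> (real^'c \<Rightarrow> real^'p \<Rightarrow> real^'n \<Rightarrow> real^'n) \<Rightarrow> (nat \<Rightarrow> (real^'n) \<times> (real^'c))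
    \<Rightarrow> (nat \<Rightarrow> real^'p) \<Rightarrow> (nat \<Rightarrow> (real^'n) \<times> (real^'c)) \<Rightarrow> nat \<Rightarrow> nat
    \<Rightarrow> real \<Rightarrow> real \<Rightarrow> real \<Rightarrow> real \<Rightarrow> real \<Rightarrow> (real^'c \<Rightarrow> real^'p \<Rightarrow> (real^'n) \<times> (real^'c)) \<Rightarrow> bool" where
  "hypC G rho sw wbar sig wst j M qB rB C delta psi wB \<longleftrightarrow>
     (\<exists>zinf. (\<lambda>n. (sw (snd (wbar j)) (sig (Suc j)) ^^ n) (fst (wbar j))) \<longlonglongrightarrow> zinf \<and>
        (let winf = (zinf, snd (wbar j) + rho *\<^sub>R G zinf (sig (Suc j)));
             d = (1 / rho) *\<^sub>R (snd (wbar j) - snd (wst j))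
         in (d \<in> ball 0 qB \<and> norm (sig (Suc j) - sig j) < rB \<longrightarrow> winf = wB d (sig (Suc j))) \<and>
            (norm (fst (wbar j) - zinf) < delta \<longrightarrow>
               norm (fst (wbar (Suc j)) - zinf) \<le> C * real M powr (- psi) * norm (fst (wbar j) - zinf))))"

end

theory Submission
  imports Defs
begin

text \<open>
  The proof is a perturbed-contraction argument.
  The standing hypotheses are then unpacked: (A) makes the KKT point move by at most
  lambda_A lambda_F h per grid step of length h, and (B) provides a solution map of the
  multiplier-perturbed KKT equation, Lipschitz with constant lambda_B lambda_H, whose
  values at the two ends of a grid step are the two KKT points.  Combining these with
  the sweep contraction of (C) yields the one-step estimate
  e_{j+1} \<le> beta_w e_j + beta_s h for the errors e_j, valid while e_j < r_w;
  the radius conditions keep all e_j below r_w, and unrolling the recursion over the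
  D grid steps gives the theorem.
\<close>

lemma closed_boxZ: "closed (boxZ lo hi)"
  unfolding boxZ_def
  by (intro closed_Collect_all closed_Collect_conj closed_Collect_le continuous_intros)

text \<open>A projected block step stays in any closed set Z containing its starting point:
  the projection is onto the (closed, nonempty) slice of Z through z.\<close>
lemma block_trial_in:
  assumes "closed Z" and "z \<in> Z"
  shows "block_trial blk Z i f z c \<in> Z"
proof -
  define K where "K = Z \<inter> {y. \<forall>x. blk x \<noteq> i \<longrightarrow> y $ x = z $ x}"
  have "closed {y. blk x \<noteq> i \<longrightarrow> y $ x = z $ x}" for x
    by (cases "blk x = i") (simp_all add: closed_Collect_eq continuous_on_component)
  then have "closed K"
    unfolding K_def by (intro closed_Int assms(1) closed_Collect_all)
  moreover have "z \<in> K" using assms(2) by (simp add: K_def)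
  ultimately have "closest_point K (z - (1 / c) *\<^sub>R bgrad blk i f z) \<in> K"
    by (intro closest_point_in_set) auto
  moreover have "K = {y. y \<in> Z \<and> (\<forall>x. blk x \<noteq> i \<longrightarrow> y $ x = z $ x)}"
    by (auto simp: K_def)
  ultimately show ?thesis
    unfolding block_trial_def K_def by auto
qed

lemma sweep_in:
  assumes "closed Z" and "z \<in> Z"
  shows "sweep J G blk Z P alpha c0 bt rho mu s z \<in> Z"
proof -
  have "foldl (\<lambda>y i. block_update blk Z i f_i (a i) (c i) bt y) y xs \<in> Z"
    if "y \<in> Z" for y xs and f_i a c
    using that
    by (induction xs arbitrary: y) (simp_all add: block_update_def block_trial_in[OF assms(1)])
  then show ?thesis unfolding sweep_def using assms(2) .
qed

lemma funpow_in:
  assumes "\<And>y. y \<in> Z \<Longrightarrow> f y \<in> Z" and "y \<in> Z"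
  shows "(f ^^ n) y \<in> Z"
  using assms(2) by (induction n) (simp_all add: assms(1))

lemma hom_iter_fst_in:
  assumes sw_in: "\<And>mu s y. y \<in> Z \<Longrightarrow> sw mu s y \<in> Z" and "fst w0 \<in> Z"
  shows "fst (hom_iter sw G rho M sg w0 j) \<in> Z"
  using assms(2) by (induction j) (simp_all add: Let_def funpow_in sw_in)

lemma frechet_derivative_add_const:
  "frechet_derivative (\<lambda>y. f y + k) F = frechet_derivative f F"
proof -
  have "((\<lambda>y. f y + k) has_derivative D) F \<longleftrightarrow> (f has_derivative D) F" for D
    using has_derivative_add_const[of f D F k]
      has_derivative_add_const[of "\<lambda>y. f y + k" D F "- k"] by auto
  then show ?thesis unfolding frechet_derivative_def by simp
qed

text \<open>The parameter s enters G only through the additive term T s, so the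
  transposed Jacobian of G does not depend on s.\<close>
lemma jacT_Gmap_param_indep:
  "jacT (Gmap cblk Qc gg T) z s mu = jacT (Gmap cblk Qc gg T) z s' mu"
proof -
  have "partial (\<lambda>y. Gmap cblk Qc gg T y s $ c) z x
          = partial (\<lambda>y. Gmap cblk Qc gg T y s' $ c) z x" for c x
  proof (cases "cblk c = 0")
    case False
    then show ?thesis
      unfolding partial_def Gmap_def
      by (simp add: frechet_derivative_add_const[of "\<lambda>y. gg y $ c"])
  qed (simp add: Gmap_def)
  then show ?thesis
    unfolding jacT_def by simp
qed

lemma Gmap_param_diff:
  assumes "\<forall>c. cblk c \<in> {0..P}"
  shows "Gmap cblk Qc gg T z s - Gmap cblk Qc gg T z s'
           = (\<Sum>i\<in>{1..P}. Tblock cblk T i (s - s'))"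
proof -
  have "(Gmap cblk Qc gg T z s - Gmap cblk Qc gg T z s') $ c
          = (\<Sum>i\<in>{1..P}. Tblock cblk T i (s - s')) $ c" for c
  proof -
    have "(\<Sum>i\<in>{1..P}. Tblock cblk T i (s - s')) $ c
            = (\<Sum>i\<in>{1..P}. if cblk c = i then (T *v (s - s')) $ c else 0)"
      by (simp add: sum_component Tblock_def)
    also have "\<dots> = (if cblk c \<in> {1..P} then (T *v (s - s')) $ c else 0)"
      by (rule sum.delta') simp
    finally show ?thesis
      using assms by (auto simp: Gmap_def matrix_vector_mult_diff_distrib)
  qed
  then show ?thesis by (simp add: vec_eq_iff)
qed

lemma Tblock_bounded_linear: "bounded_linear (Tblock cblk T i)"
proof -
  have "linear (Tblock cblk T i)"
    by (rule linearI)
      (simp_all add: Tblock_def vec_eq_iff matrix_vector_right_distrib matrix_vector_mult_scaleR)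
  then show ?thesis by (simp add: linear_conv_bounded_linear)
qed

lemma Fmap_param_Lipschitz:
  assumes "\<forall>c. cblk c \<in> {0..P}"
  shows "norm (Fmap J (Gmap cblk Qc gg T) w s - Fmap J (Gmap cblk Qc gg T) w s')
           \<le> lamF P cblk T * norm (s - s')"
proof -
  let ?G = "Gmap cblk Qc gg T"
  let ?m = "Max ((\<lambda>i. onorm (Tblock cblk T i)) ` {1..P})"
  have "norm (Fmap J ?G w s - Fmap J ?G w s') = norm (?G (fst w) s - ?G (fst w) s')"
    unfolding Fmap_def jacT_Gmap_param_indep[of cblk Qc gg T "fst w" s "snd w" s']
    by (simp add: norm_Pair)
  also have "\<dots> \<le> (\<Sum>i\<in>{1..P}. norm (Tblock cblk T i (s - s')))"
    unfolding Gmap_param_diff[OF assms(1)] by (rule norm_sum)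
  also have "\<dots> \<le> (\<Sum>i\<in>{1..P}. ?m * norm (s - s'))"
  proof (rule sum_mono)
    fix i assume "i \<in> {1..P}"
    then have "onorm (Tblock cblk T i) \<le> ?m" by (intro Max_ge) simp_all
    then show "norm (Tblock cblk T i (s - s')) \<le> ?m * norm (s - s')"
      using onorm[OF Tblock_bounded_linear, of cblk T i "s - s'"]
      by (meson mult_right_mono norm_ge_zero order_trans)
  qed
  also have "\<dots> = lamF P cblk T * norm (s - s')"
    by (simp add: lamF_def)
  finally show ?thesis .
qed

lemma norm_fst_le_prod: "norm (fst v) \<le> norm v"
  by (cases v) (simp add: norm_fst_le)

lemma norm_snd_le_prod: "norm (snd v) \<le> norm v"
  by (cases v) (simp add: norm_snd_le)

lemma grid_points_in_ball:
  assumes "norm (s' - s) < r" and "s \<in> S" and "s' \<in> S"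
  shows "s \<in> ball s r \<inter> S" and "s' \<in> ball s r \<inter> S"
proof -
  have "0 < r"
    using assms(1) norm_ge_zero[of "s' - s"] by linarith
  then show "s \<in> ball s r \<inter> S" "s' \<in> ball s r \<inter> S"
    using assms by (simp_all add: dist_norm norm_minus_commute)
qed

lemma scaled_shift_in_ball:
  assumes "rho > 0" and "norm v \<le> x" and "x < q * rho"
  shows "(1 / rho) *\<^sub>R v \<in> ball 0 q"
proof -
  have "x / rho < q"
    using assms(1,3) by (simp add: pos_divide_less_eq)
  then show ?thesis
    using assms(1,2) divide_right_mono[OF assms(2), of rho] by simp
qed

text \<open>Hypothesis (A) along one grid step: the next KKT point is the value of the
  local solution map, so it is close to the current one, at distance at most lambda_A lambda_F h.\<close>
lemma hypA_KKT_path_step: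
  assumes hA: "hypA J G Z S sig wst j rA dA lamA wA"
    and KKT: "is_KKT J G Z (wst j) (sig j)"
    and in_S: "sig j \<in> S" "sig (Suc j) \<in> S"
    and step: "norm (sig (Suc j) - sig j) < rA"
    and dA_pos: "dA > 0" and lamA_nonneg: "lamA \<ge> 0"
    and F_Lip: "\<And>w s s'. norm (Fmap J G w s - Fmap J G w s') \<le> L * norm (s - s')"
  shows "wst (Suc j) \<in> ball (wst j) dA"
    and "norm (wst (Suc j) - wst j) \<le> lamA * L * norm (sig (Suc j) - sig j)"
proof -
  have A1: "\<forall>s \<in> ball (sig j) rA \<inter> S. wA s \<in> ball (wst j) dA \<and>
              (\<forall>w \<in> ball (wst j) dA. is_KKT J G Z w s \<longrightarrow> w = wA s)"
    and A2: "\<forall>s \<in> ball (sig j) rA \<inter> S. \<forall>s' \<in> ball (sig j) rA \<inter> S.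
              norm (wA s - wA s') \<le> lamA * norm (Fmap J G (wA s') s - Fmap J G (wA s') s')"
    and A3: "wst (Suc j) = wA (sig (Suc j))"
    using hA step unfolding hypA_def by auto
  note sig_balls = grid_points_in_ball[OF step in_S]
  have "wst j \<in> ball (wst j) dA"
    using dA_pos by simp
  then have wA_j: "wA (sig j) = wst j"
    using bspec[OF A1 sig_balls(1)] KKT by metis
  show "wst (Suc j) \<in> ball (wst j) dA"
    using A1 sig_balls(2) A3 by auto
  have "norm (wst (Suc j) - wst j)
          \<le> lamA * norm (Fmap J G (wst j) (sig (Suc j)) - Fmap J G (wst j) (sig j))"
    using A2 sig_balls A3 wA_j by metis
  also have "\<dots> \<le> lamA * (L * norm (sig (Suc j) - sig j))"
    by (intro mult_left_mono F_Lip lamA_nonneg)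
  finally show "norm (wst (Suc j) - wst j) \<le> lamA * L * norm (sig (Suc j) - sig j)"
    by simp
qed

text \<open>With the multiplier shift d = (mu - mu~)/rho the map H coincides with F, so
  KKT points of the problem are solutions of the perturbed equation of (B).\<close>
lemma Hmap_multiplier_shift:
  "Hmap J G rho mut w ((1 / rho) *\<^sub>R (snd w - mut)) s = Fmap J G w s"
  by (simp add: Hmap_def Fmap_def algebra_simps)

text \<open>By uniqueness in (B), a nearby KKT point is the value of the solution map w*(d,s).\<close>
lemma hypB_recovers_KKT:
  assumes hB: "hypB J G Z rho S sig wst j rB qB lamB dB wB"
    and d_def: "d = (1 / rho) *\<^sub>R (snd w - snd (wst j))"
    and d_ball: "d \<in> ball 0 qB" and s_ball: "s \<in> ball (sig j) rB \<inter> S"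
    and w_ball: "w \<in> ball (wst j) dB" and KKT: "is_KKT J G Z w s"
  shows "wB d s = w"
proof -
  have "gen_eq Z (Hmap J G rho (snd (wst j)) w d s) w"
    using KKT unfolding is_KKT_def d_def Hmap_multiplier_shift .
  then show ?thesis
    using hB d_ball s_ball w_ball unfolding hypB_def by auto
qed

lemma hypB_Lipschitz:
  assumes hB: "hypB J G Z rho S sig wst j rB qB lamB dB wB"
    and H_Lip: "\<And>w d s d' s'. norm (Hmap J G rho (snd (wst j)) w d s - Hmap J G rho (snd (wst j)) w d' s')
                  \<le> lamH * norm ((d, s) - (d', s'))"
    and lamB_nonneg: "lamB \<ge> 0"
    and balls: "d \<in> ball 0 qB" "d' \<in> ball 0 qB" "s \<in> ball (sig j) rB \<inter> S" "s' \<in> ball (sig j) rB \<inter> S"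
  shows "norm (wB d s - wB d' s') \<le> lamB * lamH * norm ((d, s) - (d', s'))"
proof -
  have "norm (wB d s - wB d' s')
          \<le> lamB * norm (Hmap J G rho (snd (wst j)) (wB d' s') d s
                         - Hmap J G rho (snd (wst j)) (wB d' s') d' s')"
    using hB balls unfolding hypB_def by blast
  also have "\<dots> \<le> lamB * (lamH * norm ((d, s) - (d', s')))"
    by (intro mult_left_mono H_Lip lamB_nonneg)
  finally show ?thesis by simp
qed

text \<open>Distances of the solution w*(d, s^{j+1}) of (B) to the KKT points at both ends
  of a grid step, obtained from w*(0, s^j) = w*(s^j) and w*(d', s^{j+1}) = w*(s^{j+1}).\<close>
lemma hypB_solution_bounds:
  assumes hB: "hypB J G Z rho S sig wst j rB qB lamB dB wB"
    and H_Lip: "\<And>mut w d s d' s'.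
          norm (Hmap J G rho mut w d s - Hmap J G rho mut w d' s') \<le> lamH * norm ((d, s) - (d', s'))"
    and nonneg: "lamB \<ge> 0" "lamH \<ge> 0"
    and KKT: "is_KKT J G Z (wst j) (sig j)" "is_KKT J G Z (wst (Suc j)) (sig (Suc j))"
    and wst_ball: "wst (Suc j) \<in> ball (wst j) dB"
    and sig_balls: "sig j \<in> ball (sig j) rB \<inter> S" "sig (Suc j) \<in> ball (sig j) rB \<inter> S"
    and d'_def: "d' = (1 / rho) *\<^sub>R (snd (wst (Suc j)) - snd (wst j))"
    and d_ball: "d \<in> ball 0 qB" and d'_ball: "d' \<in> ball 0 qB"
  shows "norm (wB d (sig (Suc j)) - wst j) \<le> lamB * lamH * (norm d + norm (sig (Suc j) - sig j))"
    and "norm (wB d (sig (Suc j)) - wst (Suc j)) \<le> lamB * lamH * norm (d - d')"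
proof -
  have "norm d < qB"
    using d_ball by simp
  then have "0 < qB"
    using norm_ge_zero[of d] by linarith
  then have zero_ball: "0 \<in> ball 0 qB"
    by simp
  have "dist (wst j) (wst (Suc j)) < dB"
    using wst_ball by simp
  then have "dB > 0"
    using zero_le_dist[of "wst j" "wst (Suc j)"] by linarith
  then have wB_j: "wB 0 (sig j) = wst j"
    using hypB_recovers_KKT[OF hB _ zero_ball sig_balls(1) _ KKT(1)] by simp
  have "norm ((d, sig (Suc j)) - (0, sig j)) \<le> norm d + norm (sig (Suc j) - sig j)"
    using norm_Pair_le[of d "sig (Suc j) - sig j"] by simp
  then have "lamB * lamH * norm ((d, sig (Suc j)) - (0, sig j))
               \<le> lamB * lamH * (norm d + norm (sig (Suc j) - sig j))"
    using nonneg by (simp add: mult_left_mono)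
  then show "norm (wB d (sig (Suc j)) - wst j)
               \<le> lamB * lamH * (norm d + norm (sig (Suc j) - sig j))"
    using hypB_Lipschitz[OF hB H_Lip nonneg(1) d_ball zero_ball sig_balls(2,1)] wB_j by simp
  have "wB d' (sig (Suc j)) = wst (Suc j)"
    using hypB_recovers_KKT[OF hB d'_def d'_ball sig_balls(2) wst_ball KKT(2)] .
  then show "norm (wB d (sig (Suc j)) - wst (Suc j)) \<le> lamB * lamH * norm (d - d')"
    using hypB_Lipschitz[OF hB H_Lip nonneg(1) d_ball d'_ball sig_balls(2,2)] by (simp add: norm_Pair)
qed

lemma multiplier_update_Lipschitz:
  assumes "rho \<ge> 0" and "norm (g' - ginf) \<le> lamG * norm (z' - zinf)"
  shows "norm ((z', mu + rho *\<^sub>R g') - (zinf, mu + rho *\<^sub>R ginf))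
           \<le> (1 + rho * lamG) * norm (z' - zinf)"
proof -
  have "norm ((z', mu + rho *\<^sub>R g') - (zinf, mu + rho *\<^sub>R ginf))
          \<le> norm (z' - zinf) + rho * norm (g' - ginf)"
    using norm_Pair_le[of "z' - zinf" "rho *\<^sub>R (g' - ginf)"] assms(1)
    by (simp add: scaleR_diff_right[symmetric])
  moreover have "rho * norm (g' - ginf) \<le> rho * (lamG * norm (z' - zinf))"
    using assms by (simp add: mult_left_mono)
  ultimately show ?thesis
    by (simp add: algebra_simps)
qed

lemma multiplier_shift_difference:
  assumes "rho > 0" and "norm (w1 - w0) \<le> t"
  shows "norm ((1 / rho) *\<^sub>R (mu - snd w0) - (1 / rho) *\<^sub>R (snd w1 - snd w0))
           \<le> (norm ((z, mu) - w0) + t) / rho"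
proof -
  have "norm (mu - snd w1) \<le> norm (mu - snd w0) + norm (snd w1 - snd w0)"
    using norm_triangle_ineq[of "mu - snd w0" "snd w0 - snd w1"]
    by (simp add: norm_minus_commute)
  also have "\<dots> \<le> norm ((z, mu) - w0) + t"
    using norm_snd_le_prod[of "(z, mu) - w0"] norm_snd_le_prod[of "w1 - w0"] assms(2) by simp
  finally have "norm (mu - snd w1) \<le> norm ((z, mu) - w0) + t" .
  moreover have "(1 / rho) *\<^sub>R (mu - snd w0) - (1 / rho) *\<^sub>R (snd w1 - snd w0)
                   = (1 / rho) *\<^sub>R (mu - snd w1)"
    by (simp add: algebra_simps)
  ultimately show ?thesis
    using assms(1) by (simp add: divide_right_mono)
qed

text \<open>With w_infinity = (z_infinity, mu + rho g_infinity)
  the limit of infinitely many sweeps, the new iterate is compared with w_infinity (sweep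
  contraction of (C) and the Lipschitz constant of G) and w_infinity with the next KKT point
  (Lipschitz continuity of the solution map of (B)); this gives the contraction coefficients
  beta_w and beta_s.\<close>
lemma one_step_estimate:
  fixes w0 w1 :: "'a::real_normed_vector \<times> 'b::real_normed_vector"
  assumes rho_pos: "rho > 0"
    and nonneg: "lamA \<ge> 0" "lamB \<ge> 0" "lamH \<ge> 0" "lamG \<ge> 0" "C \<ge> 0"
    and d_def: "d = (1 / rho) *\<^sub>R (mu - snd w0)"
    and d'_def: "d' = (1 / rho) *\<^sub>R (snd w1 - snd w0)"
    and winf_w0: "norm ((zinf, mu + rho *\<^sub>R ginf) - w0) \<le> lamB * lamH * (norm d + h)"
    and winf_w1: "norm ((zinf, mu + rho *\<^sub>R ginf) - w1) \<le> lamB * lamH * norm (d - d')"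
    and w1_w0: "norm (w1 - w0) \<le> lamA * lF * h"
    and contraction: "norm (z - zinf) < delta
                        \<Longrightarrow> norm (z' - zinf) \<le> C * real M powr (- psi) * norm (z - zinf)"
    and G_Lip: "norm (g' - ginf) \<le> lamG * norm (z' - zinf)"
    and small: "(1 + lamH * lamB / rho) * norm ((z, mu) - w0) + lamH * lamB * h < delta"
  shows "norm ((z', mu + rho *\<^sub>R g') - w1)
           \<le> beta_w C lamG lamB lamH psi rho M * norm ((z, mu) - w0)
             + beta_s C lamG lamB lamH lamA lF psi rho M * h"
proof -
  define e where "e = norm ((z, mu) - w0)"
  define K where "K = C * real M powr (- psi)"
  define LB where "LB = lamB * lamH"
  have K_nonneg: "K \<ge> 0" and LB_nonneg: "LB \<ge> 0"
    using nonneg by (simp_all add: K_def LB_def)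
  have snd_e: "norm (mu - snd w0) \<le> e"
    using norm_snd_le_prod[of "(z, mu) - w0"] by (simp add: e_def)
  have nd: "norm d \<le> e / rho"
    using snd_e rho_pos by (simp add: d_def divide_right_mono)
  have z_zinf: "norm (z - zinf) \<le> e + LB * (e / rho + h)"
  proof -
    have "norm (z - zinf) \<le> norm ((z, mu) - (zinf, mu + rho *\<^sub>R ginf))"
      using norm_fst_le_prod[of "(z, mu) - (zinf, mu + rho *\<^sub>R ginf)"] by simp
    also have "\<dots> \<le> e + norm ((zinf, mu + rho *\<^sub>R ginf) - w0)"
      using norm_triangle_ineq[of "(z, mu) - w0" "w0 - (zinf, mu + rho *\<^sub>R ginf)"]
      by (simp add: e_def norm_minus_commute)
    also have "\<dots> \<le> e + LB * (e / rho + h)"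
      using winf_w0 mult_left_mono[OF nd LB_nonneg] by (simp add: LB_def algebra_simps)
    finally show ?thesis .
  qed
  have "e + LB * (e / rho + h) = (1 + lamH * lamB / rho) * e + lamH * lamB * h"
    using rho_pos by (simp add: LB_def algebra_simps)
  then have z'_zinf: "norm (z' - zinf) \<le> K * (e + LB * (e / rho + h))"
    using contraction z_zinf small K_nonneg
    by (simp add: K_def e_def) (meson mult_left_mono order_trans)
  have iterate_winf: "norm ((z', mu + rho *\<^sub>R g') - (zinf, mu + rho *\<^sub>R ginf))
                        \<le> (1 + rho * lamG) * norm (z' - zinf)"
    using multiplier_update_Lipschitz[OF less_imp_le[OF rho_pos] G_Lip] .
  have d_d': "norm (d - d') \<le> (e + lamA * lF * h) / rho"
    unfolding d_def d'_def e_def by (rule multiplier_shift_difference[OF rho_pos w1_w0])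
  have "norm ((z', mu + rho *\<^sub>R g') - w1)
          \<le> norm ((z', mu + rho *\<^sub>R g') - (zinf, mu + rho *\<^sub>R ginf))
            + norm ((zinf, mu + rho *\<^sub>R ginf) - w1)"
    by (rule norm_diff_triangle_le[OF order_refl order_refl])
  also have "\<dots> \<le> (1 + rho * lamG) * (K * (e + LB * (e / rho + h)))
                  + LB * ((e + lamA * lF * h) / rho)"
    using iterate_winf mult_left_mono[OF z'_zinf, of "1 + rho * lamG"]
      winf_w1 mult_left_mono[OF d_d' LB_nonneg] rho_pos nonneg
    by (simp add: LB_def)
  also have "\<dots> = beta_w C lamG lamB lamH psi rho M * e
                  + beta_s C lamG lamB lamH lamA lF psi rho M * h"
    using rho_pos by (simp add: beta_w_def beta_s_def K_def LB_def field_simps)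
  finally show ?thesis by (simp add: e_def)
qed

lemma radius_conditions:
  fixes e h rw rs :: real
  assumes "e < rw" and "h \<le> rs" and "lamH * lamB * rs < delta - (1 + lamH * lamB / rho) * rw"
    and "rho > 0" and "lamB \<ge> 0" and "lamH \<ge> 0"
  shows "(1 + lamH * lamB / rho) * e + lamH * lamB * h < delta"
proof -
  have "(1 + lamH * lamB / rho) * e \<le> (1 + lamH * lamB / rho) * rw"
    using assms by (intro mult_left_mono) auto
  moreover have "lamH * lamB * h \<le> lamH * lamB * rs"
    using assms by (intro mult_left_mono) auto
  ultimately show ?thesis
    using assms(3) by linarith
qed

lemma homotopy_index_step:
  fixes G :: "real^'z \<Rightarrow> real^'p \<Rightarrow> real^'c"
  assumes wbar_def: "wbar = hom_iter sw G rho M sig w0"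
    and hA: "hypA J G Z S sig wst j rA dA lamA wA"
    and hB: "hypB J G Z rho S sig wst j rB qB lamB dB wB"
    and hC: "hypC G rho sw wbar sig wst j M qB rB C delta psi wB"
    and Z_closed: "closed Z" and sw_in: "\<And>mu s y. y \<in> Z \<Longrightarrow> sw mu s y \<in> Z"
    and w0_in: "fst w0 \<in> Z"
    and KKT: "is_KKT J G Z (wst j) (sig j)" "is_KKT J G Z (wst (Suc j)) (sig (Suc j))"
    and in_S: "sig j \<in> S" "sig (Suc j) \<in> S"
    and h_def: "h = norm (sig (Suc j) - sig j)"
    and h_small: "h < rA" "h < rB" "lamA * lF * h < qB * rho" "h \<le> rs"
    and e_small: "norm (wbar j - wst j) < rw" and rw_qB: "rw < qB * rho"
    and radii: "lamH * lamB * rs < delta - (1 + lamH * lamB / rho) * rw"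
    and rho_pos: "rho > 0" and dA_pos: "dA > 0" and dA_dB: "dA \<le> dB"
    and nonneg: "lamA \<ge> 0" "lamB \<ge> 0" "lamH \<ge> 0" "lamG \<ge> 0" "C \<ge> 0"
    and F_Lip: "\<And>w s s'. norm (Fmap J G w s - Fmap J G w s') \<le> lF * norm (s - s')"
    and H_Lip: "\<And>mut w d s d' s'.
          norm (Hmap J G rho mut w d s - Hmap J G rho mut w d' s') \<le> lamH * norm ((d, s) - (d', s'))"
    and G_Lip: "\<And>s z z'. z \<in> Z \<Longrightarrow> z' \<in> Z \<Longrightarrow> norm (G z s - G z' s) \<le> lamG * norm (z - z')"
  shows "norm (wbar (Suc j) - wst (Suc j))
           \<le> beta_w C lamG lamB lamH psi rho M * norm (wbar j - wst j)
             + beta_s C lamG lamB lamH lamA lF psi rho M * h"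
proof -
  define mu where "mu = snd (wbar j)"
  define z' where "z' = fst (wbar (Suc j))"
  define d where "d = (1 / rho) *\<^sub>R (mu - snd (wst j))"
  define d' where "d' = (1 / rho) *\<^sub>R (snd (wst (Suc j)) - snd (wst j))"
  have wbar_Suc: "wbar (Suc j) = (z', mu + rho *\<^sub>R G z' (sig (Suc j)))"
    by (simp add: wbar_def z'_def mu_def Let_def)
  have wbar_j: "(fst (wbar j), mu) = wbar j"
    by (simp add: mu_def)
  have z_in: "fst (wbar j) \<in> Z" and z'_in: "z' \<in> Z"
    unfolding wbar_def z'_def using hom_iter_fst_in[where Z = Z and sw = sw, OF sw_in w0_in] by blast+
  have wst_ball: "wst (Suc j) \<in> ball (wst j) dB"
    and wst_step: "norm (wst (Suc j) - wst j) \<le> lamA * lF * h"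
    using hypA_KKT_path_step[OF hA KKT(1) in_S _ dA_pos nonneg(1) F_Lip] h_small(1) dA_dB
    by (auto simp: h_def)
  have sig_balls: "sig j \<in> ball (sig j) rB \<inter> S" "sig (Suc j) \<in> ball (sig j) rB \<inter> S"
    using grid_points_in_ball[OF _ in_S] h_small(2) by (simp_all add: h_def)
  have d_ball: "d \<in> ball 0 qB"
    unfolding d_def mu_def
    using scaled_shift_in_ball[OF rho_pos _ order_less_trans[OF e_small rw_qB]]
      norm_snd_le_prod[of "wbar j - wst j"] by simp
  have d'_ball: "d' \<in> ball 0 qB"
    unfolding d'_def
    using scaled_shift_in_ball[OF rho_pos _ h_small(3)]
      order_trans[OF norm_snd_le_prod[of "wst (Suc j) - wst j"] wst_step] by simp
  obtain zinf where
    lim: "(\<lambda>n. (sw mu (sig (Suc j)) ^^ n) (fst (wbar j))) \<longlonglongrightarrow> zinf" and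
    winf: "(zinf, mu + rho *\<^sub>R G zinf (sig (Suc j))) = wB d (sig (Suc j))" and
    contraction: "norm (fst (wbar j) - zinf) < delta
        \<Longrightarrow> norm (z' - zinf) \<le> C * real M powr (- psi) * norm (fst (wbar j) - zinf)"
    using hC d_ball h_small(2)
    unfolding hypC_def Let_def d_def mu_def z'_def h_def by blast
  have zinf_in: "zinf \<in> Z"
    using closed_sequentially[OF Z_closed _ lim] funpow_in[where f = "sw mu (sig (Suc j))", OF sw_in z_in]
    by blast
  note winf_bounds = hypB_solution_bounds[OF hB H_Lip nonneg(2,3) KKT wst_ball sig_balls d'_def d_ball d'_ball]
  have "(1 + lamH * lamB / rho) * norm ((fst (wbar j), mu) - wst j) + lamH * lamB * h < delta"
    using radius_conditions[OF e_small h_small(4) radii rho_pos nonneg(2,3)] unfolding wbar_j .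
  then have "norm ((z', mu + rho *\<^sub>R G z' (sig (Suc j))) - wst (Suc j))
      \<le> beta_w C lamG lamB lamH psi rho M * norm ((fst (wbar j), mu) - wst j)
        + beta_s C lamG lamB lamH lamA lF psi rho M * h"
    using winf_bounds unfolding winf[symmetric] h_def[symmetric]
    by (intro one_step_estimate[OF rho_pos nonneg d_def d'_def _ _ wst_step contraction
          G_Lip[OF z'_in zinf_in]])
  then show ?thesis
    unfolding wbar_j wbar_Suc .
qed

text \<open>Unrolling a perturbed contraction e_{j+1} \<le> beta e_j + b, which is valid as long as
  e_j stays below r; the invariant beta r + b < r keeps it there.\<close>
lemma perturbed_contraction_bound:
  fixes e :: "nat \<Rightarrow> real"
  assumes bw_nonneg: "0 \<le> bw" and invariant: "bw * r + b < r" and e0: "e 0 < r"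
    and step: "\<And>j. j < n \<Longrightarrow> e j < r \<Longrightarrow> e (Suc j) \<le> bw * e j + b"
  shows "e n \<le> bw ^ n * e 0 + b * (\<Sum>i<n. bw ^ i)"
proof -
  have "e j < r \<and> e j \<le> bw ^ j * e 0 + b * (\<Sum>i<j. bw ^ i)" if "j \<le> n" for j
    using that
  proof (induction j)
    case 0
    then show ?case using e0 by simp
  next
    case (Suc j)
    then have e_j: "e j < r" and IH: "e j \<le> bw ^ j * e 0 + b * (\<Sum>i<j. bw ^ i)"
      and e_Suc: "e (Suc j) \<le> bw * e j + b"
      using step by auto
    have "bw * e j \<le> bw * r"
      using e_j bw_nonneg by (simp add: mult_left_mono)
    then have "e (Suc j) < r"
      using e_Suc invariant by linarith
    moreover have "(\<Sum>i<Suc j. bw ^ i) = 1 + bw * (\<Sum>i<j. bw ^ i)"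
      unfolding sum.lessThan_Suc_shift by (simp add: sum_distrib_left del: sum.lessThan_Suc)
    then have "bw * (bw ^ j * e 0 + b * (\<Sum>i<j. bw ^ i)) + b
                 = bw ^ Suc j * e 0 + b * (\<Sum>i<Suc j. bw ^ i)"
      by (simp add: algebra_simps)
    ultimately show ?case
      using e_Suc mult_left_mono[OF IH bw_nonneg] by linarith
  qed
  then show ?thesis by simp
qed

lemma uniform_grid_step:
  assumes "\<forall>j. sig j = (1 - real j / real D) *\<^sub>R sk + (real j / real D) *\<^sub>R sk1" and "D > 0"
  shows "norm (sig (Suc j) - sig j) = norm (sk1 - sk) / real D"
proof -
  have "sig (Suc j) - sig j = (1 / real D) *\<^sub>R (sk1 - sk)"
    unfolding assms(1)[rule_format] using assms(2)
    by (simp add: algebra_simps add_divide_distrib diff_divide_distrib scaleR_diff_right)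
  then show ?thesis by simp
qed

lemma scaled_below_quotient:
  fixes x a b h :: real
  assumes "0 \<le> h" and "h \<le> x" and "x < a / b" and "0 < a"
  shows "b * h < a"
proof -
  have "0 < b"
  proof (rule ccontr)
    assume "\<not> 0 < b"
    then have "a / b \<le> 0"
      using \<open>0 < a\<close> by (simp add: divide_nonneg_nonpos)
    then show False
      using assms(1-3) by linarith
  qed
  then have "b * x < a" and "b * h \<le> b * x"
    using assms(2,3) by (simp_all add: pos_less_divide_eq mult.commute mult_left_mono)
  then show ?thesis
    by linarith
qed

theorem mainTheorem12:
  fixes blk :: "'z::finite \<Rightarrow> nat" and cblk :: "'c::finite \<Rightarrow> nat" and P :: nat
    and lo hi :: "real^'z"
    and Jb :: "nat \<Rightarrow> real^'z \<Rightarrow> real" and J :: "real^'z \<Rightarrow> real"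
    and Qc gg :: "real^'z \<Rightarrow> real^'c" and T :: "real^('p::finite)^'c"
    and G :: "real^'z \<Rightarrow> real^'p \<Rightarrow> real^'c"
    and S :: "(real^'p) set"
    and alpha c0 :: "nat \<Rightarrow> real" and bt rho :: real and M D :: nat
    and sk sk1 :: "real^'p" and sig :: "nat \<Rightarrow> real^'p"
    and wst :: "nat \<Rightarrow> (real^'z) \<times> (real^'c)"
    and zk :: "real^'z" and muk :: "real^'c"
    and rA dA lamA rB qB lamB dB C delta psi lamH lamG rw rs :: real
  assumes
    \<comment> \<open>problem data\<close>
        P_pos: "1 \<le> P"
    and blk_range: "\<forall>x. blk x \<in> {1..P}"
    and cblk_range: "\<forall>c. cblk c \<in> {0..P}"
    and box_nonempty: "\<forall>x. lo $ x \<le> hi $ x"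
    and J_def: "J = (\<lambda>z. \<Sum>i\<in>{1..P}. Jb i z)"
    and Jb_poly: "\<forall>i\<in>{1..P}. Jb i \<in> poly_fun \<and> block_local blk i (Jb i)"
    and Qc_poly: "poly_map Qc"
    and gg_poly: "poly_map gg"
    and gg_local: "\<forall>c. cblk c \<noteq> 0 \<longrightarrow> block_local blk (cblk c) (\<lambda>z. gg z $ c)"
    and G_def: "G = Gmap cblk Qc gg T"
    \<comment> \<open>algorithm parameters\<close>
    and alpha_pos: "\<forall>i\<in>{1..P}. alpha i > 0"
    and c0_pos: "\<forall>i\<in>{1..P}. c0 i > 0"
    and bt_gt1: "bt > 1"
    and rho_pos: "rho > 0" and M_ge1: "M \<ge> 1"
    \<comment> \<open>Lipschitz constants lambda_H and lambda_G\<close>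
    and lamH_pos: "lamH > 0"
    and lamH_Lip: "\<forall>mut w d s d' s'.
          norm (Hmap J G rho mut w d s - Hmap J G rho mut w d' s') \<le> lamH * norm ((d, s) - (d', s'))"
    and lamG_pos: "lamG > 0"
    and lamG_Lip: "\<forall>s. \<forall>z\<in>boxZ lo hi. \<forall>z'\<in>boxZ lo hi. norm (G z s - G z' s) \<le> lamG * norm (z - z')"
    \<comment> \<open>homotopy grid\<close>
    and D_ge2: "D \<ge> 2"
    and sig_def: "\<forall>j. sig j = (1 - real j / real D) *\<^sub>R sk + (real j / real D) *\<^sub>R sk1"
    and sig_S: "\<forall>j\<le>D. sig j \<in> S"
    and wst_KKT: "\<forall>j\<le>D. is_KKT J G (boxZ lo hi) (wst j) (sig j)"
    and zk_Z: "zk \<in> boxZ lo hi"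
    \<comment> \<open>standing hypotheses (A), (B), (C) with common constants\<close>
    and consts_pos: "rA > 0" "dA > 0" "lamA > 0" "rB > 0" "qB > 0" "lamB > 0" "dB \<ge> dA"
                    "C > 0" "delta > 0" "psi > 0"
    and hyps: "\<forall>j<D. \<exists>wA wB.
          hypA J G (boxZ lo hi) S sig wst j rA dA lamA wA \<and>
          hypB J G (boxZ lo hi) rho S sig wst j rB qB lamB dB wB \<and>
          hypC G rho (sweep J G blk (boxZ lo hi) P alpha c0 bt rho)
               (hom_iter (sweep J G blk (boxZ lo hi) P alpha c0 bt rho) G rho M sig (zk, muk))
               sig wst j M qB rB C delta psi wB"
    \<comment> \<open>contraction and radius conditions\<close>
    and bw_lt1: "beta_w C lamG lamB lamH psi rho M < 1"
    and bs_lt1: "beta_s C lamG lamB lamH lamA (lamF P cblk T) psi rho M < 1"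
    and rw_pos: "rw > 0" and rs_pos: "rs > 0"
    and rw_lt: "rw < qB * rho"
    and rw_delta: "delta - (1 + lamH * lamB / rho) * rw > 0"
    and rs_lt: "rs < (1 - beta_w C lamG lamB lamH psi rho M) * rw
                      / beta_s C lamG lamB lamH lamA (lamF P cblk T) psi rho M"
    and rs_delta: "lamH * lamB * rs < delta - (1 + lamH * lamB / rho) * rw"
    \<comment> \<open>initial closeness and parameter step\<close>
    and init_close: "norm ((zk, muk) - wst 0) < rw"
    and step_rs: "norm (sk1 - sk) \<le> rs"
    and step_small: "norm (sk1 - sk) < min rA (min rB (qB * rho / (lamA * lamF P cblk T)))"
  shows "norm (hom_iter (sweep J G blk (boxZ lo hi) P alpha c0 bt rho) G rho M sig (zk, muk) D - wst D)
           \<le> beta_w C lamG lamB lamH psi rho M ^ D * norm ((zk, muk) - wst 0)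
             + beta_s C lamG lamB lamH lamA (lamF P cblk T) psi rho M
               * (\<Sum>i<D. beta_w C lamG lamB lamH psi rho M ^ i) / real D * norm (sk1 - sk)"
proof -
  define sw where "sw = sweep J G blk (boxZ lo hi) P alpha c0 bt rho"
  define wbar where "wbar = hom_iter sw G rho M sig (zk, muk)"
  define bw where "bw = beta_w C lamG lamB lamH psi rho M"
  define bs where "bs = beta_s C lamG lamB lamH lamA (lamF P cblk T) psi rho M"
  define h where "h = norm (sk1 - sk) / real D"
  have sw_in: "\<And>mu s y. y \<in> boxZ lo hi \<Longrightarrow> sw mu s y \<in> boxZ lo hi"
    unfolding sw_def by (rule sweep_in[OF closed_boxZ])
  have F_Lip: "\<And>w s s'. norm (Fmap J G w s - Fmap J G w s') \<le> lamF P cblk T * norm (s - s')"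
    unfolding G_def by (rule Fmap_param_Lipschitz[OF cblk_range])
  have G_Lip: "\<And>s z z'. z \<in> boxZ lo hi \<Longrightarrow> z' \<in> boxZ lo hi
                 \<Longrightarrow> norm (G z s - G z' s) \<le> lamG * norm (z - z')"
    using lamG_Lip by blast
  have grid: "h = norm (sig (Suc j) - sig j)" for j
    using uniform_grid_step[OF sig_def] D_ge2 by (simp add: h_def)
  have h_bounds: "0 \<le> h" "h \<le> norm (sk1 - sk)"
    using D_ge2 divide_left_mono[of 1 "real D" "norm (sk1 - sk)"] by (simp_all add: h_def)
  have lAF_h: "lamA * lamF P cblk T * h < qB * rho"
    using scaled_below_quotient[OF h_bounds] step_small consts_pos(5) rho_pos by simp
  have invariant: "bw * rw + bs * h < rw"
    using scaled_below_quotient[OF h_bounds(1) order_trans[OF h_bounds(2) step_rs] rs_lt] bw_lt1 rw_pos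
    by (simp add: bw_def bs_def algebra_simps)
  have bw_nonneg: "0 \<le> bw"
    using consts_pos rho_pos lamG_pos lamH_pos by (simp add: bw_def beta_w_def)
  have "norm (wbar D - wst D) \<le> bw ^ D * norm (wbar 0 - wst 0) + bs * h * (\<Sum>i<D. bw ^ i)"
  proof (rule perturbed_contraction_bound[where e = "\<lambda>j. norm (wbar j - wst j)", OF bw_nonneg invariant])
    show "norm (wbar 0 - wst 0) < rw"
      using init_close by (simp add: wbar_def)
    fix j assume j: "j < D" and e_j: "norm (wbar j - wst j) < rw"
    obtain wA wB where hA: "hypA J G (boxZ lo hi) S sig wst j rA dA lamA wA"
      and hB: "hypB J G (boxZ lo hi) rho S sig wst j rB qB lamB dB wB"
      and hC: "hypC G rho sw wbar sig wst j M qB rB C delta psi wB"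
      using hyps j unfolding sw_def wbar_def by blast
    have "is_KKT J G (boxZ lo hi) (wst i) (sig i)" and "sig i \<in> S" if "i \<le> Suc j" for i
      using wst_KKT sig_S j that by simp_all
    then show "norm (wbar (Suc j) - wst (Suc j)) \<le> bw * norm (wbar j - wst j) + bs * h"
      unfolding bw_def bs_def
      using h_bounds step_small step_rs consts_pos lamH_pos lamG_pos
      by (intro homotopy_index_step[OF wbar_def hA hB hC closed_boxZ sw_in _ _ _ _ _ grid _ _ lAF_h
            _ e_j rw_lt rs_delta rho_pos _ _ _ _ _ _ _ F_Lip lamH_Lip[rule_format] G_Lip])
        (simp_all add: zk_Z)
  qed
  moreover have "bs * h * (\<Sum>i<D. bw ^ i) = bs * (\<Sum>i<D. bw ^ i) / real D * norm (sk1 - sk)"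
    by (simp add: h_def)
  ultimately show ?thesis
    by (simp add: wbar_def sw_def bw_def bs_def)
qed

end
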